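(* Every perfect binary tree is odd prime.
   Context: All graphs are finite and simple. A graph $G$ of order $N$ is odd prime if there is a bijection $\ell:V(G)\to\{1,3,\ldots,2N-1\}$ with $\gcd(\ell(u),\ell(v))=1$ for every edge $uv$. A perfect binary tree with $n\ge 1$ levels is a rooted tree in which every non-leaf vertex has exactly two children and all leaves lie on the same level; level $i$ has $2^{i-1}$ vertices, $1\le i\le n$. *)

theory Defs
  imports Main
begin

definition simple_graph :: "'a set \<Rightarrow> 'a set set \<Rightarrow> bool" where
  "simple_graph V E \<longleftrightarrow> finite V \<and> (\<forall>e\<in>E. \<exists>u v. e = {u, v} \<and> u \<noteq> v \<and> u \<in> V \<and> v \<in> V)"

definition odd_prime :: "'a set \<Rightarrow> 'a set set \<Rightarrow> bool" where
  "odd_prime V E \<longleftrightarrow> (\<exists>l :: 'a \<Rightarrow> nat.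
     bij_betw l V {m. odd m \<and> m \<le> 2 * card V - 1} \<and>
     (\<forall>u v. {u, v} \<in> E \<longrightarrow> coprime (l u) (l v)))"

text \<open>Canonical perfect binary tree with n levels (heap indexing): vertices 1..2^n-1,
  vertex k has children 2k and 2k+1; level i consists of 2^(i-1) .. 2^i - 1.\<close>
definition pbt_verts :: "nat \<Rightarrow> nat set" where
  "pbt_verts n = {1..2 ^ n - 1}"

definition pbt_edges :: "nat \<Rightarrow> nat set set" where
  "pbt_edges n = {{k, c} | k c. 1 \<le> k \<and> (c = 2 * k \<or> c = 2 * k + 1) \<and> c \<le> 2 ^ n - 1}"

definition perfect_binary_tree :: "'a set \<Rightarrow> 'a set set \<Rightarrow> nat \<Rightarrow> bool" where
  "perfect_binary_tree V E n \<longleftrightarrow> n \<ge> 1 \<and> simple_graph V E \<and>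
     (\<exists>f. bij_betw f V (pbt_verts n) \<and>
          (\<forall>u\<in>V. \<forall>v\<in>V. {u, v} \<in> E \<longleftrightarrow> {f u, f v} \<in> pbt_edges n))"

end

theory Submission
  imports Defs
begin

text \<open>Label heap vertex \<open>k\<close> by \<open>2k + 1\<close>; a child \<open>2k\<close> or \<open>2k + 1\<close> then gets
  \<open>2(2k + 1) - 1\<close> or \<open>2(2k + 1) + 1\<close>, which differs by one from twice the parent's
  label and is therefore coprime to it. This uses the odd numbers \<open>3, \<dots>, 2N + 1\<close>; the
  last vertex \<open>N\<close> has no children, so it can instead take the missing label \<open>1\<close>, which is
  coprime to everything. An isomorphism transports the labelling to any perfect binary tree.\<close>

lemma coprime_double_plus_one: "coprime (a::nat) (2 * a + 1)"
proof (rule coprimeI)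
  fix d assume "d dvd a" "d dvd 2 * a + 1"
  then have "d dvd (2 * a + 1) - 2 * a" by (intro dvd_diff_nat) simp_all
  then show "is_unit d" by simp
qed

lemma coprime_double_minus_one: "coprime (a::nat) (2 * a - 1)" if "a \<ge> 1"
proof (rule coprimeI)
  fix d assume "d dvd a" "d dvd 2 * a - 1"
  then have "d dvd 2 * a - (2 * a - 1)" by (simp add: dvd_diff_nat)
  then show "is_unit d" using that by simp
qed

lemma odd_prime_transfer:
  assumes "simple_graph V E" and "bij_betw f V W"
    and "\<forall>u\<in>V. \<forall>v\<in>V. {u, v} \<in> E \<longrightarrow> {f u, f v} \<in> F"
    and "odd_prime W F"
  shows "odd_prime V E"
proof -
  obtain l where l: "bij_betw l W {m. odd m \<and> m \<le> 2 * card W - 1}"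
    and l_coprime: "\<forall>u v. {u, v} \<in> F \<longrightarrow> coprime (l u) (l v)"
    using assms(4) by (auto simp: odd_prime_def)
  have "bij_betw (l \<circ> f) V {m. odd m \<and> m \<le> 2 * card V - 1}"
    using bij_betw_trans[OF assms(2) l] bij_betw_same_card[OF assms(2)] by simp
  moreover have "coprime (l (f u)) (l (f v))" if "{u, v} \<in> E" for u v
  proof -
    have "u \<in> V" "v \<in> V"
      using assms(1) that unfolding simple_graph_def by (auto simp: doubleton_eq_iff)
    then show ?thesis using assms(3) that l_coprime by blast
  qed
  ultimately show ?thesis unfolding odd_prime_def by auto
qed

definition heap_edges :: "nat \<Rightarrow> nat set set" where
  "heap_edges N = {{k, c} | k c. 1 \<le> k \<and> (c = 2 * k \<or> c = 2 * k + 1) \<and> c \<le> N}"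

definition heap_label :: "nat \<Rightarrow> nat \<Rightarrow> nat" where
  "heap_label N k = (if k = N then 1 else 2 * k + 1)"

lemma heap_label_bij: "bij_betw (heap_label N) {1..N} {m. odd m \<and> m \<le> 2 * N - 1}"
proof (rule bij_betw_imageI)
  show "inj_on (heap_label N) {1..N}"
    unfolding inj_on_def heap_label_def by auto
  have "m \<in> heap_label N ` {1..N}" if "odd m" "m \<le> 2 * N - 1" for m
  proof (cases "m = 1")
    case True
    then show ?thesis using that by (force simp: heap_label_def)
  next
    case False
    obtain k where "m = 2 * k + 1" using \<open>odd m\<close> by (auto elim: oddE)
    with False that have "m = heap_label N k" "k \<in> {1..N}" by (auto simp: heap_label_def)
    then show ?thesis by blast
  qed
  then show "heap_label N ` {1..N} = {m. odd m \<and> m \<le> 2 * N - 1}"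
    by (auto simp: heap_label_def)
qed

lemma heap_label_coprime_child:
  assumes "1 \<le> k" and "c = 2 * k \<or> c = 2 * k + 1" and "c \<le> N"
  shows "coprime (heap_label N k) (heap_label N c)"
proof (cases "c = N")
  case False
  with assms have labels: "heap_label N k = 2 * k + 1" "heap_label N c = 2 * c + 1"
    by (auto simp: heap_label_def)
  from assms(2) show ?thesis
  proof
    assume "c = 2 * k"
    then show ?thesis
      using labels coprime_double_minus_one[of "2 * k + 1"] by (simp add: algebra_simps)
  next
    assume "c = 2 * k + 1"
    then show ?thesis
      using labels coprime_double_plus_one[of "2 * k + 1"] by (simp add: algebra_simps)
  qed
qed (simp add: heap_label_def)

lemma odd_prime_heap: "odd_prime {1..N} (heap_edges N)"
  unfolding odd_prime_def
proof (intro exI conjI allI impI)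
  show "bij_betw (heap_label N) {1..N} {m. odd m \<and> m \<le> 2 * card {1..N} - 1}"
    using heap_label_bij by simp
  show "coprime (heap_label N u) (heap_label N v)" if "{u, v} \<in> heap_edges N" for u v
    using that heap_label_coprime_child
    by (auto simp: heap_edges_def doubleton_eq_iff coprime_commute)
qed

theorem theorem4p3:
  fixes V :: "'a set" and E :: "'a set set" and n :: nat
  assumes "perfect_binary_tree V E n"
  shows "odd_prime V E"
proof -
  obtain f where "simple_graph V E" "bij_betw f V {1..2 ^ n - 1}"
    and "\<forall>u\<in>V. \<forall>v\<in>V. {u, v} \<in> E \<longleftrightarrow> {f u, f v} \<in> heap_edges (2 ^ n - 1)"
    using assms
    unfolding perfect_binary_tree_def pbt_verts_def pbt_edges_def heap_edges_def by blast
  then show ?thesis using odd_prime_transfer odd_prime_heap by blast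
qed

end
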